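(* Let $d\ge 0$ be an integer, let $b_0=0<b_1<\dots<b_d$ be real numbers, and let $p_0(x),p_1(x),\dots,p_d(x)\in\mathbf{R}[x]$ be polynomials with real coefficients, not all of them zero. Then the function $$F(x)=\sum_{i=0}^d p_i(x)\log(x+b_i),$$ defined for $x>0$, has only finitely many positive real zeros. In particular, the sequence $(\log n)_{n\ge 1}$ is not holonomic.
   Context: A sequence of complex numbers $(a_n)_{n\ge 1}$ is called holonomic (P-recursive, D-finite) if there exist an integer $d\ge 0$ and polynomials $p_0(x),\dots,p_d(x)\in\mathbf{C}[x]$, not all zero, such that $p_d(n)a_{n+d}+\cdots+p_1(n)a_{n+1}+p_0(n)a_n=0$ for every integer $n\ge 1$. Here $\log$ denotes the natural logarithm. *)

theory Defs
  imports Complex_Main "HOL-Computational_Algebra.Polynomial"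
begin

text \<open>A sequence (a_n)_{n \<ge> 1} of complex numbers is holonomic if there are d \<ge> 0 and
  complex polynomials p_0..p_d, not all zero, with
  p_d(n) a_{n+d} + ... + p_0(n) a_n = 0 for every n \<ge> 1.
  The value a 0 is irrelevant (the sequence is indexed from 1).\<close>
definition holonomic :: "(nat \<Rightarrow> complex) \<Rightarrow> bool" where
  "holonomic a \<longleftrightarrow>
     (\<exists>(d::nat) (p::nat \<Rightarrow> complex poly).
        (\<exists>i\<le>d. p i \<noteq> 0) \<and>
        (\<forall>n\<ge>1. (\<Sum>i\<le>d. poly (p i) (of_nat n) * a (n + i)) = 0))"

end

theory Submission
  imports Defs "HOL-Complex_Analysis.Complex_Analysis" "HOL-Real_Asymp.Real_Asymp"
begin

text \<open>
  The function F extends holomorphically to the plane slit along the negative real axis, so by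
  the identity theorem its positive zeros cannot accumulate at a positive point unless F vanishes
  on (0, \<infinity>). Near 0, F(t) = p_0(t) log t + G(t) with G holomorphic on a disc, and
  \<alpha>(t) log t + \<beta>(t) with \<alpha>, \<beta> holomorphic can vanish arbitrarily close to 0 only if
  \<alpha> = \<beta> = 0: comparing the orders of vanishing of \<alpha> and \<beta>, this would make log t either
  bounded or of order 1/t. Near \<infinity>, the substitution x = 1/t followed by multiplication with t^D
  leads to the same form, now with polynomial \<alpha>. So an infinite zero set forces F = 0 on
  (0, \<infinity>). Then p_0 = 0 and G = 0 near 0, hence on (-b_1, \<infinity>) by analytic continuation;
  shifting by b_1 and inducting on d gives p_i = 0 for all i. Finally, a recurrence for log n
  would, after taking real and imaginary parts, give such an F with b_i = i vanishing at every
  positive integer.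
\<close>

lemma poly_map_poly_of_real [simp]:
  "poly (map_poly of_real p) (of_real x :: 'a::{comm_ring_1,real_algebra_1}) = of_real (poly p x)"
  by (induction p) (auto simp: map_poly_pCons)

lemma Re_poly_of_real: "Re (poly p (complex_of_real x)) = poly (map_poly Re p) x"
  by (induction p) (auto simp: map_poly_pCons)

lemma Im_poly_of_real: "Im (poly p (complex_of_real x)) = poly (map_poly Im p) x"
  by (induction p) (auto simp: map_poly_pCons)

lemma poly_eq_0_iff_Re_Im: "p = 0 \<longleftrightarrow> map_poly Re p = 0 \<and> map_poly Im p = 0"
  by (auto simp: poly_eq_iff coeff_map_poly complex_eq_iff)

definition reflect_poly_to :: "nat \<Rightarrow> 'a::comm_semiring_1 poly \<Rightarrow> 'a poly" where
  "reflect_poly_to D p = monom 1 (D - degree p) * reflect_poly p"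

lemma poly_reflect_poly_to:
  fixes x :: "'a::field"
  assumes "degree p \<le> D" "x \<noteq> 0"
  shows "poly (reflect_poly_to D p) x = x ^ D * poly p (inverse x)"
  using assms
  by (simp add: reflect_poly_to_def poly_monom poly_reflect_poly_nz flip: mult.assoc power_add)

lemma increasing_upto_le:
  assumes "\<And>i. i < d \<Longrightarrow> b i < (b (Suc i) :: 'a::order)" "i \<le> j" "j \<le> d"
  shows "b i \<le> b j"
proof (rule lift_Suc_mono_le_ivl[of "{..<d}"])
  show "b n \<le> b (Suc n)" if "n \<in> {..<d}" for n
    using assms(1)[of n] that by simp
qed (use assms in auto)

lemma islimpt_of_real:
  "\<xi> islimpt U \<Longrightarrow> (of_real \<xi> :: 'a::real_normed_algebra_1) islimpt of_real ` U"
  unfolding islimpt_approachable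
  by (metis dist_norm image_eqI norm_of_real of_real_diff of_real_eq_iff real_norm_def)

lemma tendsto_of_real_at_right_0: "((\<lambda>t. of_real t :: 'a::real_normed_algebra_1) \<longlongrightarrow> 0) (at_right 0)"
  using tendsto_of_real[OF tendsto_ident_at[of 0 "{0<..}"]] by simp

lemma frequently_at_right_if_greater: "(\<And>x. a < x \<Longrightarrow> P x) \<Longrightarrow> \<exists>\<^sub>F x in at_right (a::real). P x"
  using eventually_at_right_less[of a] by (auto intro!: eventually_frequently elim!: eventually_mono)

lemma eventually_nonzero_factor:
  fixes h :: "'a \<Rightarrow> 'b::{t1_space, semiring_no_zero_divisors}"
  assumes "(h \<longlongrightarrow> c) F" "c \<noteq> 0" "\<forall>\<^sub>F t in F. u t \<noteq> 0" "\<forall>\<^sub>F t in F. \<phi> t = u t * h t"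
  shows "\<forall>\<^sub>F t in F. \<phi> t \<noteq> 0"
  using tendsto_imp_eventually_ne[OF assms(1,2)] assms(3,4) by eventually_elim simp

lemma infinite_pos_set_has_pos_limit_point:
  fixes Z :: "real set"
  assumes "infinite Z" "Z \<subseteq> {0<..}"
    and "\<not> (\<exists>\<^sub>F x in at_right 0. x \<in> Z)" "\<not> (\<exists>\<^sub>F x in at_top. x \<in> Z)"
  obtains \<xi> where "0 < \<xi>" "\<xi> islimpt Z"
proof -
  obtain a where "0 < a" and a: "\<And>x. 0 < x \<Longrightarrow> x < a \<Longrightarrow> x \<notin> Z"
    using assms(3) unfolding not_frequently eventually_at_right_field by blast
  obtain N where N: "\<And>x. N \<le> x \<Longrightarrow> x \<notin> Z"
    using assms(4) unfolding not_frequently eventually_at_top_linorder by blast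
  have "Z \<subseteq> {a..N}"
  proof
    fix x assume "x \<in> Z"
    with assms(2) a[of x] N[of x] have "\<not> x < a" "\<not> N \<le> x"
      by auto
    then show "x \<in> {a..N}"
      by simp
  qed
  then obtain \<xi> where "\<xi> \<in> {a..N}" "\<xi> islimpt Z"
    using compact_eq_Bolzano_Weierstrass[THEN iffD1, OF compact_Icc] assms(1) by blast
  moreover from \<open>\<xi> \<in> {a..N}\<close> \<open>0 < a\<close> have "0 < \<xi>"
    by simp
  ultimately show ?thesis
    using that by blast
qed

lemma in_ball_0_imp_pos: "(z::complex) \<in> ball 0 r \<Longrightarrow> 0 < r"
  by (metis le_less_trans mem_ball zero_le_dist)

lemma ball_0_subset_slit: "ball 0 r \<subseteq> - (complex_of_real ` {..-r})"
proof
  fix z :: complex assume "z \<in> ball 0 r"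
  then have "- Re z < r"
    using abs_Re_le_cmod[of z] by simp
  then show "z \<in> - (complex_of_real ` {..-r})"
    by (auto simp: complex_slot_left_eq)
qed

lemma one_plus_of_real_mult_notin_nonpos_Reals:
  assumes "0 \<le> c" "c * R < 1" "z \<in> ball 0 R"
  shows "1 + complex_of_real c * z \<notin> \<real>\<^sub>\<le>\<^sub>0"
proof -
  have "c * (- Re z) \<le> c * cmod z"
    using assms(1) abs_Re_le_cmod[of z] by (intro mult_left_mono) auto
  also have "\<dots> \<le> c * R"
    using assms(1,3) by (intro mult_left_mono) (auto simp: dist_norm)
  finally have "0 < Re (1 + complex_of_real c * z)"
    using assms(2) by simp
  then show ?thesis
    by (auto simp: complex_nonpos_Reals_iff)
qed

section \<open>Holomorphic functions and the logarithm near 0\<close>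

lemma holomorphic_tendsto_at_right_0:
  assumes "f holomorphic_on ball 0 r" "r > 0"
  shows "((\<lambda>t. f (complex_of_real t)) \<longlongrightarrow> f 0) (at_right 0)"
proof -
  have "isCont f 0"
    using assms by (meson centre_in_ball continuous_on_eq_continuous_at
        holomorphic_on_imp_continuous_on open_ball)
  then show ?thesis
    using tendsto_of_real_at_right_0 by (rule isCont_tendsto_compose)
qed

lemma holomorphic_factor_at_right_0:
  fixes f :: "complex \<Rightarrow> complex"
  assumes hol: "f holomorphic_on ball 0 r" and z: "z \<in> ball 0 r" "f z \<noteq> 0"
  obtains n g where "((\<lambda>t. g (complex_of_real t)) \<longlongrightarrow> g 0) (at_right 0)" "g 0 \<noteq> 0"
    "\<forall>\<^sub>F t in at_right 0. f (of_real t) = of_real t ^ n * g (of_real t)"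
proof (cases "f 0 = 0")
  case False
  then show ?thesis
    using that[of f 0] holomorphic_tendsto_at_right_0[OF hol in_ball_0_imp_pos[OF z(1)]] by simp
next
  case True
  have "\<not> f constant_on ball 0 r"
    using True z unfolding constant_on_def by (metis centre_in_ball in_ball_0_imp_pos)
  then obtain g s n where s: "0 < s" and g: "g holomorphic_on ball 0 s" "g 0 \<noteq> 0"
    and f: "\<And>w. w \<in> ball 0 s \<Longrightarrow> f w = w ^ n * g w"
    using holomorphic_factor_zero_nonconstant[OF hol open_ball connected_ball _ True]
      in_ball_0_imp_pos[OF z(1)] by (metis centre_in_ball diff_zero)
  have "\<forall>\<^sub>F t in at_right 0. t \<in> {0<..<s}"
    using eventually_at_right_real s by blast
  then have "\<forall>\<^sub>F t in at_right 0. f (of_real t) = of_real t ^ n * g (of_real t)"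
    by eventually_elim (auto simp: f dist_norm)
  then show ?thesis
    using that holomorphic_tendsto_at_right_0[OF g(1) s] g(2) by blast
qed

lemma holomorphic_frequently_zero_at_right_0:
  fixes f :: "complex \<Rightarrow> complex"
  assumes "f holomorphic_on ball 0 r" and zeros: "\<exists>\<^sub>F t in at_right 0. f (of_real t) = 0"
  shows "\<forall>z\<in>ball 0 r. f z = 0"
proof (rule ccontr)
  assume "\<not> ?thesis"
  then obtain z where z: "z \<in> ball 0 r" "f z \<noteq> 0"
    by blast
  obtain n g where g: "((\<lambda>t. g (complex_of_real t)) \<longlongrightarrow> g 0) (at_right 0)" "g 0 \<noteq> 0"
    and f: "\<forall>\<^sub>F t in at_right 0. f (of_real t) = of_real t ^ n * g (of_real t)"
    using holomorphic_factor_at_right_0[OF assms(1) z] .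
  have "\<forall>\<^sub>F t in at_right 0. complex_of_real t ^ n \<noteq> 0"
    using eventually_at_right_less[of "0::real"] by eventually_elim simp
  from eventually_nonzero_factor[OF g this f] zeros show False
    by (simp add: frequently_def)
qed

lemma eventually_ln_term_dominates:
  fixes a g :: "real \<Rightarrow> complex"
  assumes a: "(a \<longlongrightarrow> a0) (at_right 0)" "a0 \<noteq> 0" and g: "(g \<longlongrightarrow> g0) (at_right 0)"
    and "k \<le> j"
  shows "\<forall>\<^sub>F t in at_right 0. of_real t ^ k * a t * of_real (ln t) + of_real t ^ j * g t \<noteq> 0"
proof -
  have "((\<lambda>t::real. 1 / ln t) \<longlongrightarrow> 0) (at_right 0)"
    by real_asymp
  from tendsto_of_real[OF this]
  have inv_ln: "((\<lambda>t. complex_of_real (1 / ln t)) \<longlongrightarrow> 0) (at_right 0)"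
    unfolding of_real_0 .
  have lim: "((\<lambda>t. a t + of_real t ^ (j - k) * g t * of_real (1 / ln t))
      \<longlongrightarrow> a0 + 0 ^ (j - k) * g0 * 0) (at_right 0)"
    by (intro tendsto_add tendsto_mult tendsto_power a g tendsto_of_real_at_right_0 inv_ln)
  have unit: "\<forall>\<^sub>F t in at_right 0. t \<in> {0<..<(1::real)}"
    by (rule eventually_at_right_real) simp
  then have nonzero: "\<forall>\<^sub>F t in at_right 0. complex_of_real t ^ k * of_real (ln t) \<noteq> 0"
    by eventually_elim simp
  from unit have factor: "\<forall>\<^sub>F t in at_right 0.
      of_real t ^ k * a t * of_real (ln t) + of_real t ^ j * g t =
      of_real t ^ k * of_real (ln t) * (a t + of_real t ^ (j - k) * g t * of_real (1 / ln t))"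
  proof eventually_elim
    case (elim t)
    have "complex_of_real t ^ j = of_real t ^ k * of_real t ^ (j - k)"
      using \<open>k \<le> j\<close> by (simp flip: power_add)
    with elim show ?case
      by (simp add: field_simps)
  qed
  show ?thesis
    by (rule eventually_nonzero_factor[OF lim _ nonzero factor]) (simp add: a(2))
qed

lemma eventually_power_term_dominates:
  fixes a g :: "real \<Rightarrow> complex"
  assumes a: "(a \<longlongrightarrow> a0) (at_right 0)" and g: "(g \<longlongrightarrow> g0) (at_right 0)" "g0 \<noteq> 0"
    and "j < k"
  shows "\<forall>\<^sub>F t in at_right 0. of_real t ^ k * a t * of_real (ln t) + of_real t ^ j * g t \<noteq> 0"
proof -
  have "((\<lambda>t::real. t * ln t) \<longlongrightarrow> 0) (at_right 0)"
    by real_asymp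
  from tendsto_of_real[OF this]
  have t_ln_t: "((\<lambda>t. complex_of_real (t * ln t)) \<longlongrightarrow> 0) (at_right 0)"
    unfolding of_real_0 .
  have lim: "((\<lambda>t. g t + of_real t ^ (k - Suc j) * of_real (t * ln t) * a t)
      \<longlongrightarrow> g0 + 0 ^ (k - Suc j) * 0 * a0) (at_right 0)"
    by (intro tendsto_add tendsto_mult tendsto_power a g tendsto_of_real_at_right_0 t_ln_t)
  have nonzero: "\<forall>\<^sub>F t in at_right 0. complex_of_real t ^ j \<noteq> 0"
    using eventually_at_right_less[of "0::real"] by eventually_elim simp
  have factor: "\<forall>\<^sub>F t in at_right 0.
      of_real t ^ k * a t * of_real (ln t) + of_real t ^ j * g t =
      of_real t ^ j * (g t + of_real t ^ (k - Suc j) * of_real (t * ln t) * a t)"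
  proof (intro always_eventually allI)
    fix t
    have "complex_of_real t ^ k = of_real t ^ j * (of_real t * of_real t ^ (k - Suc j))"
      using \<open>j < k\<close> by (simp flip: power_add power_Suc)
    then show "of_real t ^ k * a t * of_real (ln t) + of_real t ^ j * g t =
        of_real t ^ j * (g t + of_real t ^ (k - Suc j) * of_real (t * ln t) * a t)"
      by (simp add: algebra_simps)
  qed
  show ?thesis
    by (rule eventually_nonzero_factor[OF lim _ nonzero factor]) (simp add: g(2))
qed

lemma holomorphic_ln_combination_eventually_nonzero:
  fixes \<alpha> \<beta> :: "complex \<Rightarrow> complex"
  assumes hol: "\<alpha> holomorphic_on ball 0 r" "\<beta> holomorphic_on ball 0 r"
    and z: "z \<in> ball 0 r" "\<alpha> z \<noteq> 0"
  shows "\<forall>\<^sub>F t in at_right 0. \<alpha> (of_real t) * of_real (ln t) + \<beta> (of_real t) \<noteq> 0"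
proof -
  obtain k a where a: "((\<lambda>t. a (complex_of_real t)) \<longlongrightarrow> a 0) (at_right 0)" "a 0 \<noteq> 0"
    and \<alpha>: "\<forall>\<^sub>F t in at_right 0. \<alpha> (of_real t) = of_real t ^ k * a (of_real t)"
    using holomorphic_factor_at_right_0[OF hol(1) z] .
  have small: "\<forall>\<^sub>F t in at_right 0. t \<in> {0<..<min r 1}"
    using in_ball_0_imp_pos[OF z(1)] by (intro eventually_at_right_real) simp
  show ?thesis
  proof (cases "\<forall>z\<in>ball 0 r. \<beta> z = 0")
    case True
    from small have "\<forall>\<^sub>F t in at_right 0. complex_of_real t ^ k * of_real (ln t) \<noteq> 0"
      by eventually_elim simp
    moreover from \<alpha> small have "\<forall>\<^sub>F t in at_right 0.
        \<alpha> (of_real t) * of_real (ln t) + \<beta> (of_real t) = of_real t ^ k * of_real (ln t) * a (of_real t)"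
      by eventually_elim (use True in \<open>auto simp: dist_norm mult_ac\<close>)
    ultimately show ?thesis
      by (rule eventually_nonzero_factor[OF a])
  next
    case False
    then obtain z' where z': "z' \<in> ball 0 r" "\<beta> z' \<noteq> 0"
      by blast
    obtain j g where g: "((\<lambda>t. g (complex_of_real t)) \<longlongrightarrow> g 0) (at_right 0)" "g 0 \<noteq> 0"
      and \<beta>: "\<forall>\<^sub>F t in at_right 0. \<beta> (of_real t) = of_real t ^ j * g (of_real t)"
      using holomorphic_factor_at_right_0[OF hol(2) z'] .
    have "\<forall>\<^sub>F t in at_right 0.
        of_real t ^ k * a (of_real t) * of_real (ln t) + of_real t ^ j * g (of_real t) \<noteq> 0"
    proof (cases "k \<le> j")
      case True
      then show ?thesis
        by (rule eventually_ln_term_dominates[OF a g(1)])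
    next
      case False
      then show ?thesis
        by (intro eventually_power_term_dominates[OF a(1) g]) simp
    qed
    with \<alpha> \<beta> show ?thesis
      by eventually_elim simp
  qed
qed

lemma holomorphic_ln_combination_frequently_zero:
  fixes \<alpha> \<beta> :: "complex \<Rightarrow> complex"
  assumes hol: "\<alpha> holomorphic_on ball 0 r" "\<beta> holomorphic_on ball 0 r" and "0 < r"
    and zeros: "\<exists>\<^sub>F t in at_right 0. \<alpha> (of_real t) * of_real (ln t) + \<beta> (of_real t) = 0"
  shows "\<forall>z\<in>ball 0 r. \<alpha> z = 0 \<and> \<beta> z = 0"
proof -
  have \<alpha>_zero: "\<forall>z\<in>ball 0 r. \<alpha> z = 0"
  proof (rule ballI, rule ccontr)
    fix z assume "z \<in> ball 0 r" "\<alpha> z \<noteq> 0"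
    from holomorphic_ln_combination_eventually_nonzero[OF hol this] zeros show False
      by (simp add: frequently_def)
  qed
  have "\<forall>\<^sub>F t in at_right 0. t \<in> {0<..<r}"
    using \<open>0 < r\<close> by (rule eventually_at_right_real)
  then have "\<forall>\<^sub>F t in at_right 0. \<alpha> (of_real t) = 0"
    by eventually_elim (use \<alpha>_zero in \<open>simp add: dist_norm\<close>)
  with zeros have "\<exists>\<^sub>F t in at_right 0. \<beta> (of_real t) = 0"
    by (rule frequently_rev_mp[OF _ eventually_mono]) simp
  with \<alpha>_zero holomorphic_frequently_zero_at_right_0[OF hol(2)] show ?thesis
    by blast
qed

section \<open>Sums of polynomials times shifted logarithms\<close>

definition ln_poly_sum :: "(nat \<Rightarrow> real) \<Rightarrow> (nat \<Rightarrow> real poly) \<Rightarrow> nat set \<Rightarrow> real \<Rightarrow> real" where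
  "ln_poly_sum b p I x = (\<Sum>i\<in>I. poly (p i) x * ln (x + b i))"

definition Ln_poly_sum :: "(nat \<Rightarrow> real) \<Rightarrow> (nat \<Rightarrow> real poly) \<Rightarrow> nat set \<Rightarrow> complex \<Rightarrow> complex" where
  "Ln_poly_sum b p I z = (\<Sum>i\<in>I. poly (map_poly of_real (p i)) z * Ln (z + of_real (b i)))"

lemma Ln_poly_sum_of_real:
  assumes "\<And>i. i \<in> I \<Longrightarrow> 0 < x + b i"
  shows "Ln_poly_sum b p I (of_real x) = of_real (ln_poly_sum b p I x)"
  unfolding Ln_poly_sum_def ln_poly_sum_def of_real_sum
  by (intro sum.cong refl) (simp add: assms Ln_of_real flip: of_real_add)

lemma holomorphic_on_Ln_poly_sum:
  assumes "\<And>i. i \<in> I \<Longrightarrow> c \<le> b i"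
  shows "Ln_poly_sum b p I holomorphic_on - (complex_of_real ` {..-c})"
  unfolding Ln_poly_sum_def[abs_def]
proof (intro holomorphic_intros)
  fix i z assume "i \<in> I" "z \<in> - (complex_of_real ` {..-c})"
  then show "z + complex_of_real (b i) \<notin> \<real>\<^sub>\<le>\<^sub>0"
    using assms[of i] by (auto simp: complex_slot_left_eq complex_nonpos_Reals_iff)
qed

lemma ln_poly_sum_analytic_continuation:
  assumes b: "\<And>i. i \<in> I \<Longrightarrow> c \<le> b i"
    and U: "U \<subseteq> {-c<..}" "\<xi> islimpt U" "-c < \<xi>"
    and zero: "\<And>x. x \<in> U \<Longrightarrow> ln_poly_sum b p I x = 0"
    and x: "-c < x"
  shows "ln_poly_sum b p I x = 0"
proof -
  let ?S = "- (complex_of_real ` {..-c})"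
  have in_S: "complex_of_real y \<in> ?S" if "-c < y" for y
    using that by (auto simp: complex_slot_left_eq)
  have of_real_eq: "Ln_poly_sum b p I (of_real y) = of_real (ln_poly_sum b p I y)" if "-c < y" for y
    using that b by (intro Ln_poly_sum_of_real) force
  have "Ln_poly_sum b p I (of_real x) = 0"
  proof (rule analytic_continuation[of "Ln_poly_sum b p I" ?S "of_real ` U" "of_real \<xi>"])
    show "Ln_poly_sum b p I holomorphic_on ?S"
      using b by (rule holomorphic_on_Ln_poly_sum)
    show "open ?S"
      using closed_slot_left by blast
    show "connected ?S"
      by (intro starlike_imp_connected starlike_slotted_complex_plane_left)
    show "complex_of_real \<xi> islimpt complex_of_real ` U"
      using U(2) by (rule islimpt_of_real)
    show "Ln_poly_sum b p I z = 0" if "z \<in> of_real ` U" for z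
      using that U(1) zero of_real_eq by auto
  qed (use U in_S x in auto)
  with of_real_eq[OF x] show ?thesis
    by simp
qed

lemma ln_poly_sum_split_0:
  "b 0 = 0 \<Longrightarrow> ln_poly_sum b p {..d} x = poly (p 0) x * ln x + ln_poly_sum b p {1..d} x"
  unfolding ln_poly_sum_def atLeast0AtMost[symmetric] by (simp add: sum.atLeast_Suc_atMost)

lemma ln_poly_sum_shift:
  "ln_poly_sum (\<lambda>i. b (Suc i) - c) (\<lambda>i. pcompose (p (Suc i)) [:-c, 1:]) {..d} x
     = ln_poly_sum b p {1..Suc d} (x - c)"
  unfolding ln_poly_sum_def atLeast0AtMost[symmetric]
  using sum.shift_bounds_cl_Suc_ivl[of "\<lambda>i. poly (p i) (x - c) * ln (x - c + b i)" 0 d]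
  by (simp add: poly_pcompose algebra_simps)

lemma ln_poly_sum_at_inverse:
  assumes "0 < t" and b: "\<And>i. i \<in> I \<Longrightarrow> 0 \<le> b i" and deg: "\<And>i. i \<in> I \<Longrightarrow> degree (p i) \<le> D"
  shows "t ^ D * ln_poly_sum b p I (1 / t)
    = - (\<Sum>i\<in>I. poly (reflect_poly_to D (p i)) t) * ln t
      + (\<Sum>i\<in>I. poly (reflect_poly_to D (p i)) t * ln (1 + b i * t))"
proof -
  have "t ^ D * (poly (p i) (1 / t) * ln (1 / t + b i))
      = poly (reflect_poly_to D (p i)) t * (ln (1 + b i * t) - ln t)" if "i \<in> I" for i
  proof -
    have "0 < 1 + b i * t"
      using \<open>0 < t\<close> b[OF that] by (simp add: add_pos_nonneg)
    moreover have "1 / t + b i = (1 + b i * t) / t"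
      using \<open>0 < t\<close> by (simp add: field_simps)
    ultimately have "ln (1 / t + b i) = ln (1 + b i * t) - ln t"
      using \<open>0 < t\<close> by (simp add: ln_div)
    with poly_reflect_poly_to[OF deg[OF that], of t] \<open>0 < t\<close> show ?thesis
      by (simp add: inverse_eq_divide)
  qed
  then have "t ^ D * ln_poly_sum b p I (1 / t)
      = (\<Sum>i\<in>I. poly (reflect_poly_to D (p i)) t * (ln (1 + b i * t) - ln t))"
    unfolding ln_poly_sum_def sum_distrib_left by (rule sum.cong[OF refl])
  then show ?thesis
    by (simp add: right_diff_distrib sum_subtractf sum_distrib_right)
qed

section \<open>Accumulation of zeros\<close>

lemma poly_ln_plus_ln_poly_sum_frequently_zero:
  assumes r: "0 < r" "\<And>i. i \<in> I \<Longrightarrow> r \<le> b i"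
    and zeros: "\<exists>\<^sub>F t in at_right 0. poly q t * ln t + ln_poly_sum b p I t = 0"
  shows "q = 0" and "\<And>x. -r < x \<Longrightarrow> ln_poly_sum b p I x = 0"
proof -
  have of_real_eq: "Ln_poly_sum b p I (of_real t) = of_real (ln_poly_sum b p I t)" if "0 < t" for t
    using that r by (intro Ln_poly_sum_of_real) (metis add_pos_pos order_less_le_trans)
  have "\<exists>\<^sub>F t in at_right 0.
      poly (map_poly of_real q) (of_real t) * of_real (ln t) + Ln_poly_sum b p I (of_real t) = 0"
    using zeros
  proof (rule frequently_rev_mp)
    show "\<forall>\<^sub>F t in at_right 0. poly q t * ln t + ln_poly_sum b p I t = 0 \<longrightarrow>
        poly (map_poly of_real q) (of_real t) * of_real (ln t) + Ln_poly_sum b p I (of_real t) = 0"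
      using eventually_at_right_less[of "0::real"]
      by eventually_elim (simp add: of_real_eq flip: of_real_mult of_real_add)
  qed
  moreover have "poly (map_poly of_real q) holomorphic_on ball 0 r"
    by (intro holomorphic_intros)
  moreover have "Ln_poly_sum b p I holomorphic_on ball 0 r"
    using holomorphic_on_Ln_poly_sum[OF r(2)] ball_0_subset_slit by (rule holomorphic_on_subset)
  ultimately have vanish: "\<forall>z\<in>ball 0 r. poly (map_poly of_real q) z = 0 \<and> Ln_poly_sum b p I z = 0"
    using r(1) by (intro holomorphic_ln_combination_frequently_zero)
  have small: "complex_of_real t \<in> ball 0 r" if "t \<in> {0<..<r}" for t
    using that by (simp add: dist_norm)
  have "{0<..<r} \<subseteq> {x. poly q x = 0}"
    using bspec[OF vanish small] by auto
  then show "q = 0"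
    using poly_roots_finite[of q] r(1) finite_subset infinite_Ioo by blast
  show "ln_poly_sum b p I x = 0" if "-r < x" for x
  proof (rule ln_poly_sum_analytic_continuation[of I r b "{0<..<r}" "r / 2"])
    show "r / 2 islimpt {0<..<r}"
      using r(1) by (intro open_imp_islimpt) auto
    show "ln_poly_sum b p I t = 0" if "t \<in> {0<..<r}" for t
      using vanish small[OF that] of_real_eq[of t] that by auto
  qed (use r that in auto)
qed

lemma ln_poly_sum_frequently_zero_at_right_0:
  assumes b: "b 0 = 0" "\<And>i. i < d \<Longrightarrow> b i < b (Suc i)"
    and zeros: "\<exists>\<^sub>F t in at_right 0. ln_poly_sum b p {..d} t = 0"
  shows "p 0 = 0" and "\<And>x. - b 1 < x \<Longrightarrow> ln_poly_sum b p {1..d} x = 0"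
proof -
  \<comment> \<open>For d = 0 the value b 1 is unconstrained, but then the sum over {1..d} is empty.\<close>
  define r where "r = (if d = 0 then 1 else b 1)"
  have r: "0 < r" "\<And>i. i \<in> {1..d} \<Longrightarrow> r \<le> b i"
    using b(1) b(2)[of 0] increasing_upto_le[of d b 1] b(2) by (auto simp: r_def)
  have freq: "\<exists>\<^sub>F t in at_right 0. poly (p 0) t * ln t + ln_poly_sum b p {1..d} t = 0"
    using zeros by (simp add: ln_poly_sum_split_0[of b, OF b(1)])
  note tail = poly_ln_plus_ln_poly_sum_frequently_zero[OF r freq]
  show "p 0 = 0"
    using tail(1) by simp
  show "ln_poly_sum b p {1..d} x = 0" if "- b 1 < x" for x
    using tail(2)[of x] that by (cases "d = 0") (auto simp: r_def ln_poly_sum_def)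
qed

lemma ln_poly_sum_zero_if_frequently_zero_at_right_0:
  assumes b: "b 0 = 0" "\<And>i. i < d \<Longrightarrow> b i < b (Suc i)"
    and zeros: "\<exists>\<^sub>F t in at_right 0. ln_poly_sum b p {..d} t = 0" and "0 < x"
  shows "ln_poly_sum b p {..d} x = 0"
proof -
  note at_0 = ln_poly_sum_frequently_zero_at_right_0[OF b zeros]
  have "ln_poly_sum b p {1..d} x = 0"
  proof (cases "d = 0")
    case False
    then have "0 < b 1"
      using b(1) b(2)[of 0] by simp
    with at_0(2) \<open>0 < x\<close> show ?thesis
      by simp
  qed (simp add: ln_poly_sum_def)
  with at_0(1) show ?thesis
    by (simp add: ln_poly_sum_split_0[of b, OF b(1)])
qed

lemma ln_poly_sum_eq_0_imp_poly_eq_0: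
  assumes "b 0 = 0" "\<And>i. i < d \<Longrightarrow> b i < b (Suc i)"
    and "\<And>x. 0 < x \<Longrightarrow> ln_poly_sum b p {..d} x = 0" and "i \<le> d"
  shows "p i = 0"
  using assms
proof (induction d arbitrary: b p i)
  case 0
  have "\<exists>\<^sub>F t in at_right 0. ln_poly_sum b p {..0} t = 0"
    using 0 by (intro frequently_at_right_if_greater)
  with 0(1) have "p 0 = 0"
    by (intro ln_poly_sum_frequently_zero_at_right_0(1)[of b 0 p]) auto
  with 0 show ?case
    by simp
next
  case (Suc d)
  have "\<exists>\<^sub>F t in at_right 0. ln_poly_sum b p {..Suc d} t = 0"
    using Suc.prems(3) by (intro frequently_at_right_if_greater)
  note at_0 = ln_poly_sum_frequently_zero_at_right_0[OF Suc.prems(1,2) this]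
  have "pcompose (p (Suc j)) [:-b 1, 1:] = 0" if "j \<le> d" for j
  proof (rule Suc.IH[of "\<lambda>i. b (Suc i) - b 1" "\<lambda>i. pcompose (p (Suc i)) [:-b 1, 1:]" j])
    show "ln_poly_sum (\<lambda>i. b (Suc i) - b 1) (\<lambda>i. pcompose (p (Suc i)) [:-b 1, 1:]) {..d} x = 0"
      if "0 < x" for x
      using at_0(2)[of "x - b 1"] that by (simp add: ln_poly_sum_shift)
  qed (use Suc.prems(2) that in auto)
  then have "p (Suc j) = 0" if "j \<le> d" for j
    using that pcompose_eq_0 by fastforce
  with at_0(1) Suc.prems(4) show ?case
    by (cases i) auto
qed

lemma ln_poly_sum_at_inverse_ln_combination:
  assumes "finite I" and b: "\<And>i. i \<in> I \<Longrightarrow> 0 \<le> b i"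
  obtains A B :: "complex \<Rightarrow> complex" and R :: real and D :: nat
  where "0 < R" "A holomorphic_on ball 0 R" "B holomorphic_on ball 0 R"
    "\<And>t. 0 < t \<Longrightarrow> A (of_real t) * of_real (ln t) + B (of_real t)
        = of_real (t ^ D * ln_poly_sum b p I (1 / t))"
proof -
  define D where "D = (\<Sum>i\<in>I. degree (p i))"
  define R where "R = 1 / (1 + (\<Sum>i\<in>I. b i))"
  \<comment> \<open>A and B extend the two sums of ln_poly_sum_at_inverse to the complex plane.\<close>
  define A where "A z = - (\<Sum>i\<in>I. poly (map_poly of_real (reflect_poly_to D (p i))) z)"
    for z :: complex
  define B where "B z = (\<Sum>i\<in>I. poly (map_poly of_real (reflect_poly_to D (p i))) z
      * Ln (1 + of_real (b i) * z))" for z :: complex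
  have "0 \<le> (\<Sum>i\<in>I. b i)"
    using b by (simp add: sum_nonneg)
  then have R: "0 < R"
    by (simp add: R_def)
  have bR: "b i * R < 1" if "i \<in> I" for i
  proof -
    have "b i \<le> (\<Sum>i\<in>I. b i)"
      using \<open>finite I\<close> b that by (intro member_le_sum) auto
    then show ?thesis
      using \<open>0 \<le> (\<Sum>i\<in>I. b i)\<close> by (simp add: R_def field_simps)
  qed
  have deg: "degree (p i) \<le> D" if "i \<in> I" for i
    unfolding D_def using \<open>finite I\<close> that by (intro member_le_sum) auto
  have "A holomorphic_on ball 0 R"
    unfolding A_def by (intro holomorphic_intros)
  moreover have "B holomorphic_on ball 0 R"
    unfolding B_def
  proof (intro holomorphic_intros)
    show "1 + complex_of_real (b i) * z \<notin> \<real>\<^sub>\<le>\<^sub>0" if "i \<in> I" "z \<in> ball 0 R" for i z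
      using b bR that by (intro one_plus_of_real_mult_notin_nonpos_Reals) auto
  qed
  moreover have "A (of_real t) * of_real (ln t) + B (of_real t)
      = of_real (t ^ D * ln_poly_sum b p I (1 / t))" if "0 < t" for t
  proof -
    have "Ln (1 + of_real (b i) * of_real t) = of_real (ln (1 + b i * t))" if "i \<in> I" for i
      using Ln_of_real[of "1 + b i * t"] b[OF that] \<open>0 < t\<close> by (simp add: add_pos_nonneg)
    then have "B (of_real t) = of_real (\<Sum>i\<in>I. poly (reflect_poly_to D (p i)) t * ln (1 + b i * t))"
      unfolding B_def of_real_sum by (intro sum.cong) auto
    then show ?thesis
      by (simp add: A_def ln_poly_sum_at_inverse[OF that b deg])
  qed
  ultimately show ?thesis
    using that R by blast
qed

lemma ln_poly_sum_frequently_zero_at_top_imp_eventually_zero: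
  assumes "finite I" and b: "\<And>i. i \<in> I \<Longrightarrow> 0 \<le> b i"
    and zeros: "\<exists>\<^sub>F x in at_top. ln_poly_sum b p I x = 0"
  shows "\<forall>\<^sub>F x in at_top. ln_poly_sum b p I x = 0"
proof -
  obtain A B R D where R: "0 < R" and hol: "A holomorphic_on ball 0 R" "B holomorphic_on ball 0 R"
    and identity: "\<And>t. 0 < t \<Longrightarrow> A (of_real t) * of_real (ln t) + B (of_real t)
        = of_real (t ^ D * ln_poly_sum b p I (1 / t))"
    by (rule ln_poly_sum_at_inverse_ln_combination[OF \<open>finite I\<close>, where b = b and p = p])
      (use b in auto)
  have "\<exists>\<^sub>F t in at_right 0. ln_poly_sum b p I (1 / t) = 0"
    using zeros unfolding frequently_def eventually_at_right_to_top by (simp add: inverse_eq_divide)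
  then have "\<exists>\<^sub>F t in at_right 0. A (of_real t) * of_real (ln t) + B (of_real t) = 0"
  proof (rule frequently_rev_mp)
    show "\<forall>\<^sub>F t in at_right 0. ln_poly_sum b p I (1 / t) = 0 \<longrightarrow>
        A (of_real t) * of_real (ln t) + B (of_real t) = 0"
      using eventually_at_right_less[of "0::real"] by eventually_elim (simp add: identity)
  qed
  with hol R have vanish: "\<forall>z\<in>ball 0 R. A z = 0 \<and> B z = 0"
    by (intro holomorphic_ln_combination_frequently_zero)
  have "\<forall>\<^sub>F t in at_right 0. ln_poly_sum b p I (1 / t) = 0"
    using eventually_at_right_real[OF R]
  proof eventually_elim
    case (elim t)
    then have "complex_of_real t \<in> ball 0 R"
      by (simp add: dist_norm)
    with vanish identity[of t] elim have "complex_of_real (t ^ D * ln_poly_sum b p I (1 / t)) = 0"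
      by simp
    with elim show ?case
      by simp
  qed
  then show ?thesis
    unfolding eventually_at_right_to_top by (simp add: inverse_eq_divide)
qed

lemma ln_poly_sum_zero_if_frequently_zero_at_top:
  assumes "finite I" and b: "\<And>i. i \<in> I \<Longrightarrow> 0 \<le> b i"
    and zeros: "\<exists>\<^sub>F x in at_top. ln_poly_sum b p I x = 0" and "0 < x"
  shows "ln_poly_sum b p I x = 0"
proof -
  obtain N where N: "\<And>y. N \<le> y \<Longrightarrow> ln_poly_sum b p I y = 0"
    using ln_poly_sum_frequently_zero_at_top_imp_eventually_zero[OF assms(1-3)]
    unfolding eventually_at_top_linorder by blast
  show ?thesis
  proof (rule ln_poly_sum_analytic_continuation[of I 0 b "{max N 0<..}" "max N 0 + 1"])
    show "max N 0 + 1 islimpt {max N 0<..}"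
      by (intro open_imp_islimpt) auto
  qed (use b N \<open>0 < x\<close> in auto)
qed

lemma finite_ln_poly_sum_zeros:
  assumes b: "b 0 = 0" "\<And>i. i < d \<Longrightarrow> b i < b (Suc i)" and nonzero: "\<exists>i\<le>d. p i \<noteq> 0"
  shows "finite {x. 0 < x \<and> ln_poly_sum b p {..d} x = 0}" (is "finite ?Z")
proof (rule ccontr)
  assume "infinite ?Z"
  have b_nonneg: "0 \<le> b i" if "i \<le> d" for i
    using increasing_upto_le[of d b 0 i] b that by simp
  have "ln_poly_sum b p {..d} x = 0" if "0 < x" for x
  proof (cases "\<exists>\<^sub>F t in at_right 0. t \<in> ?Z")
    case True
    then have "\<exists>\<^sub>F t in at_right 0. ln_poly_sum b p {..d} t = 0"
      by (rule frequently_elim1) simp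
    with b \<open>0 < x\<close> show ?thesis
      by (intro ln_poly_sum_zero_if_frequently_zero_at_right_0)
  next
    case not_at_0: False
    show ?thesis
    proof (cases "\<exists>\<^sub>F t in at_top. t \<in> ?Z")
      case True
      then have zeros: "\<exists>\<^sub>F t in at_top. ln_poly_sum b p {..d} t = 0"
        by (rule frequently_elim1) simp
      show ?thesis
        by (rule ln_poly_sum_zero_if_frequently_zero_at_top[OF finite_atMost _ zeros \<open>0 < x\<close>])
          (simp add: b_nonneg)
    next
      case False
      then obtain \<xi> where \<xi>: "0 < \<xi>" "\<xi> islimpt ?Z"
        using infinite_pos_set_has_pos_limit_point[OF \<open>infinite ?Z\<close> _ not_at_0] by blast
      show ?thesis
      proof (rule ln_poly_sum_analytic_continuation[of "{..d}" 0 b ?Z \<xi>])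
        show "ln_poly_sum b p {..d} y = 0" if "y \<in> ?Z" for y
          using that by simp
      qed (use \<xi> b_nonneg \<open>0 < x\<close> in auto)
    qed
  qed
  with ln_poly_sum_eq_0_imp_poly_eq_0[of b d p, OF b] nonzero show False
    by blast
qed

lemma poly_eq_0_if_ln_poly_sum_vanishes_at_nats:
  assumes "\<And>n. 1 \<le> n \<Longrightarrow> ln_poly_sum real q {..d} (real n) = 0" and "i \<le> d"
  shows "q i = 0"
proof (rule ccontr)
  assume "q i \<noteq> 0"
  with \<open>i \<le> d\<close> have "finite {x. 0 < x \<and> ln_poly_sum real q {..d} x = 0}"
    by (intro finite_ln_poly_sum_zeros) auto
  moreover have "real ` {1..} \<subseteq> {x. 0 < x \<and> ln_poly_sum real q {..d} x = 0}"
    using assms(1) by auto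
  moreover have "infinite (real ` {1::nat..})"
    by (simp add: finite_image_iff infinite_Ici)
  ultimately show False
    using finite_subset by blast
qed

lemma not_holonomic_ln: "\<not> holonomic (\<lambda>n. complex_of_real (ln (real n)))"
proof
  assume "holonomic (\<lambda>n. complex_of_real (ln (real n)))"
  then obtain d and p :: "nat \<Rightarrow> complex poly" where nonzero: "\<exists>i\<le>d. p i \<noteq> 0"
    and rec: "\<And>n. 1 \<le> n \<Longrightarrow> (\<Sum>i\<le>d. poly (p i) (of_nat n) * of_real (ln (real (n + i)))) = 0"
    unfolding holonomic_def by blast
  have "ln_poly_sum real (\<lambda>i. map_poly Re (p i)) {..d} (real n) = 0"
    and "ln_poly_sum real (\<lambda>i. map_poly Im (p i)) {..d} (real n) = 0" if "1 \<le> n" for n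
  proof -
    from rec[OF that]
    have "Re (\<Sum>i\<le>d. poly (p i) (of_nat n) * of_real (ln (real (n + i)))) = 0"
      and "Im (\<Sum>i\<le>d. poly (p i) (of_nat n) * of_real (ln (real (n + i)))) = 0"
      by simp_all
    then show "ln_poly_sum real (\<lambda>i. map_poly Re (p i)) {..d} (real n) = 0"
      and "ln_poly_sum real (\<lambda>i. map_poly Im (p i)) {..d} (real n) = 0"
      by (simp_all add: ln_poly_sum_def Re_poly_of_real[of _ "real n", unfolded of_real_of_nat_eq]
          Im_poly_of_real[of _ "real n", unfolded of_real_of_nat_eq])
  qed
  then have "map_poly Re (p i) = 0 \<and> map_poly Im (p i) = 0" if "i \<le> d" for i
    using poly_eq_0_if_ln_poly_sum_vanishes_at_nats[of "\<lambda>i. map_poly Re (p i)" d i]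
      poly_eq_0_if_ln_poly_sum_vanishes_at_nats[of "\<lambda>i. map_poly Im (p i)" d i] that by blast
  with nonzero show False
    using poly_eq_0_iff_Re_Im by blast
qed

theorem mainTheorem1:
  fixes d :: nat and b :: "nat \<Rightarrow> real" and p :: "nat \<Rightarrow> real poly"
  assumes "b 0 = 0"
    and "\<And>i. i < d \<Longrightarrow> b i < b (Suc i)"
    and "\<exists>i\<le>d. p i \<noteq> 0"
  shows "finite {x::real. x > 0 \<and> (\<Sum>i\<le>d. poly (p i) x * ln (x + b i)) = 0}
         \<and> \<not> holonomic (\<lambda>n. complex_of_real (ln (real n)))"
  using finite_ln_poly_sum_zeros[where b = b and d = d and p = p, OF assms] not_holonomic_ln
  unfolding ln_poly_sum_def by (rule conjI)

end
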